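(* Let $R$ be a skew field and let $n \geqslant 3$ be an integer. Let $P$ be an $n$-gon whose vertex set is numbered by $\{1,\ldots,n\}$ so that $1<2<\cdots<n<1$ or $1>2>\cdots>n>1$ in the cyclic order of the vertices. Let $c : \operatorname{diag} P \to R^*$ be a frieze, and let $M_c$ be the $n \times n$ matrix whose $(i,k)$ entry is $c_{ik}$ for $i \neq k$ and $0$ for $i=k$. Then the Dieudonné determinant of $M_c$ is \[ \det M_c = \overline{-(-2)^{n-2}} \cdot \overline{c_{12}c_{23}\cdots c_{n-1,n}c_{n1}}. \]
   Context: A polygon $P$ is a finite set $V$ of at least three vertices with a cyclic ordering; $\operatorname{diag} P$ is the set of ordered pairs $(i,k)$ of distinct vertices (called diagonals), and we write $c_{ik}$ for $c(i,k)$. Diagonals $(i,k)$ and $(j,\ell)$ cross if $i,j,k,\ell$ are pairwise distinct and $i<j<k<\ell$ or $i<\ell<k<j$ in the cyclic order. For a ring $R$ with group of units $R^*$, a map $c:\operatorname{diag}P\to R^*$ is a frieze if (i) for all pairwise distinct vertices $i,j,k$ the triangle relation $c_{ij}c_{kj}^{-1}c_{ki}=c_{ik}c_{jk}^{-1}c_{ji}$ holds, and (ii) whenever $(i,k)$ and $(j,\ell)$ cross, the exchange relation $c_{ik}=c_{ij}c_{\ell j}^{-1}c_{\ell k}+c_{i\ell}c_{j\ell}^{-1}c_{jk}$ holds. For a skew field $R$, the Dieudonné determinant takes values in $(R^*/[R^*,R^*])\,\dot\cup\,\{0\}$; for $x \in R^*$, $\overline{x}$ denotes the coset of $x$ in the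 abelianisation $R^*/[R^*,R^*]$, and $\overline{0}=0$. *)

theory Defs
  imports Main
begin

text \<open>The vertices of the n-gon are numbered 1..n, with cyclic order
  1 < 2 < ... < n < 1 (reversed = False) or 1 > 2 > ... > n > 1 (reversed = True).
  cyc4 lt a b d e means a < b < d < e in the cyclic order induced by the
  linear order lt on the labels.\<close>

definition cyc4 :: "(nat \<Rightarrow> nat \<Rightarrow> bool) \<Rightarrow> nat \<Rightarrow> nat \<Rightarrow> nat \<Rightarrow> nat \<Rightarrow> bool" where
  "cyc4 lt a b d e \<longleftrightarrow>
     (lt a b \<and> lt b d \<and> lt d e) \<or> (lt b d \<and> lt d e \<and> lt e a) \<or>
     (lt d e \<and> lt e a \<and> lt a b) \<or> (lt e a \<and> lt a b \<and> lt b d)"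

definition vord :: "bool \<Rightarrow> nat \<Rightarrow> nat \<Rightarrow> bool" where
  "vord reversed a b = (if reversed then b < a else a < b)"

definition crosses :: "bool \<Rightarrow> nat \<Rightarrow> nat \<Rightarrow> nat \<Rightarrow> nat \<Rightarrow> bool" where
  "crosses reversed i k j l \<longleftrightarrow>
     distinct [i, j, k, l] \<and> (cyc4 (vord reversed) i j k l \<or> cyc4 (vord reversed) i l k j)"

definition is_frieze :: "nat \<Rightarrow> bool \<Rightarrow> (nat \<Rightarrow> nat \<Rightarrow> 'a::division_ring) \<Rightarrow> bool" where
  "is_frieze n reversed c \<longleftrightarrow>
     (\<forall>i\<in>{1..n}. \<forall>k\<in>{1..n}. i \<noteq> k \<longrightarrow> c i k \<noteq> 0) \<and>
     (\<forall>i\<in>{1..n}. \<forall>j\<in>{1..n}. \<forall>k\<in>{1..n}. distinct [i, j, k] \<longrightarrow>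
        c i j * inverse (c k j) * c k i = c i k * inverse (c j k) * c j i) \<and>
     (\<forall>i\<in>{1..n}. \<forall>j\<in>{1..n}. \<forall>k\<in>{1..n}. \<forall>l\<in>{1..n}. crosses reversed i k j l \<longrightarrow>
        c i k = c i j * inverse (c l j) * c l k + c i l * inverse (c j l) * c j k)"

inductive_set comm_subgrp :: "'a::division_ring set" where
  one: "1 \<in> comm_subgrp"
| comm: "a \<noteq> 0 \<Longrightarrow> b \<noteq> 0 \<Longrightarrow> a * b * inverse a * inverse b \<in> comm_subgrp"
| mult: "x \<in> comm_subgrp \<Longrightarrow> y \<in> comm_subgrp \<Longrightarrow> x * y \<in> comm_subgrp"
| inv: "x \<in> comm_subgrp \<Longrightarrow> inverse x \<in> comm_subgrp"

text \<open>The class of x: the coset x[R*,R*] in R*/[R*,R*] for x \<noteq> 0, and the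
  extra element 0 (represented by {0}) for x = 0.\<close>
definition cls :: "'a::division_ring \<Rightarrow> 'a set" where
  "cls x = (if x = 0 then {0} else {x * h | h. h \<in> comm_subgrp})"

definition cls_mult :: "'a::division_ring set \<Rightarrow> 'a set \<Rightarrow> 'a set" where
  "cls_mult A B = {a * b | a b. a \<in> A \<and> b \<in> B}"

definition mat_mult :: "nat \<Rightarrow> (nat \<Rightarrow> nat \<Rightarrow> 'a::ring_1) \<Rightarrow> (nat \<Rightarrow> nat \<Rightarrow> 'a) \<Rightarrow> nat \<Rightarrow> nat \<Rightarrow> 'a" where
  "mat_mult n A B i k = (\<Sum>j\<in>{1..n}. A i j * B j k)"

definition mat_id :: "nat \<Rightarrow> nat \<Rightarrow> 'a::ring_1" where
  "mat_id i k = (if i = k then 1 else 0)"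

definition mat_eq :: "nat \<Rightarrow> (nat \<Rightarrow> nat \<Rightarrow> 'a) \<Rightarrow> (nat \<Rightarrow> nat \<Rightarrow> 'a) \<Rightarrow> bool" where
  "mat_eq n A B \<longleftrightarrow> (\<forall>i\<in>{1..n}. \<forall>k\<in>{1..n}. A i k = B i k)"

definition mat_invertible :: "nat \<Rightarrow> (nat \<Rightarrow> nat \<Rightarrow> 'a::ring_1) \<Rightarrow> bool" where
  "mat_invertible n A \<longleftrightarrow> (\<exists>B. mat_eq n (mat_mult n A B) mat_id \<and> mat_eq n (mat_mult n B A) mat_id)"

definition elem_mat :: "nat \<Rightarrow> nat \<Rightarrow> 'a::ring_1 \<Rightarrow> nat \<Rightarrow> nat \<Rightarrow> 'a" where
  "elem_mat p q a i k = mat_id i k + (if i = p \<and> k = q then a else 0)"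

inductive_set elem_prods :: "nat \<Rightarrow> (nat \<Rightarrow> nat \<Rightarrow> 'a::ring_1) set" for n where
  id: "mat_id \<in> elem_prods n"
| step: "E \<in> elem_prods n \<Longrightarrow> p \<in> {1..n} \<Longrightarrow> q \<in> {1..n} \<Longrightarrow> p \<noteq> q \<Longrightarrow>
         mat_mult n E (elem_mat p q a) \<in> elem_prods n"

definition diag_last :: "nat \<Rightarrow> 'a::ring_1 \<Rightarrow> nat \<Rightarrow> nat \<Rightarrow> 'a" where
  "diag_last n x i k = (if i = k then (if i = n then x else 1) else 0)"

text \<open>Dieudonne determinant: every invertible A can be written as E diag(1,..,1,x)
  with E in E_n(R), and det A is the class of x in R*/[R*,R*] (well defined by
  Dieudonne's theorem); det A = 0 for singular A.\<close>
definition dieudonne_det :: "nat \<Rightarrow> (nat \<Rightarrow> nat \<Rightarrow> 'a::division_ring) \<Rightarrow> 'a set" where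
  "dieudonne_det n A =
     (if mat_invertible n A
      then cls (SOME x. x \<noteq> 0 \<and> (\<exists>E\<in>elem_prods n. mat_eq n A (mat_mult n E (diag_last n x))))
      else {0})"

definition frieze_mat :: "(nat \<Rightarrow> nat \<Rightarrow> 'a::zero) \<Rightarrow> nat \<Rightarrow> nat \<Rightarrow> 'a" where
  "frieze_mat c i k = (if i = k then 0 else c i k)"

end

theory Submission
  imports Defs "HOL-Library.Multiset"
begin

(* Gaussian elimination computes the Dieudonne determinant. A determinant defined by expanding
   along the last row at a pivot is invariant modulo commutators under adding a
   multiple of one column to another and multiplicative under scaling a column; hence the class
   of x in a factorisation A = E diag(1,...,1,x) with E elementary does not depend on the
   factorisation, and it is the class of the diagonal product whenever A can be brought to
   lower triangular form by column additions.

   For a frieze, subtracting from column k (k = n, ..., 3) right multiples of the columns k - 1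
   and 1 clears column k above the diagonal by the exchange relation, leaving
   -2 c(k,k-1) c(1,k-1)^-1 c(1,k) on the diagonal; two further column operations make the
   matrix lower triangular. Modulo commutators the triangle relation for (1, k-1, k) turns the
   product of these diagonal entries into a telescoping product, which gives
   -(-2)^(n-2) c(1,2) c(2,3) ... c(n,1). In characteristic 2 the last row is a combination of
   the rows n - 1 and 1, so both sides are 0. *)

lemma nonzero_mult_inverse_cancel_left [simp]:
  "(z::'a::division_ring) \<noteq> 0 \<Longrightarrow> z * (inverse z * w) = w"
  by (simp add: mult.assoc[symmetric])

lemma nonzero_inverse_mult_cancel_left [simp]:
  "(z::'a::division_ring) \<noteq> 0 \<Longrightarrow> inverse z * (z * w) = w"
  by (simp add: mult.assoc[symmetric])

section \<open>Equality in the abelianised unit group\<close>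

lemma comm_subgrp_nonzero: "x \<in> comm_subgrp \<Longrightarrow> (x::'a::division_ring) \<noteq> 0"
  by (induction rule: comm_subgrp.induct) auto

lemma comm_subgrp_conj:
  assumes "h \<in> comm_subgrp" "(x::'a::division_ring) \<noteq> 0"
  shows "x * h * inverse x \<in> comm_subgrp"
proof -
  have h: "h \<noteq> 0" using comm_subgrp_nonzero assms(1) by blast
  have "(x * h * inverse x * inverse h) * h \<in> comm_subgrp"
    using comm_subgrp.comm[OF assms(2) h] assms(1) by (rule comm_subgrp.mult)
  then show ?thesis using h by (simp add: mult.assoc)
qed

definition abel_eq :: "'a::division_ring \<Rightarrow> 'a \<Rightarrow> bool" where
  "abel_eq x y \<longleftrightarrow> (x = 0 \<and> y = 0) \<or> (x \<noteq> 0 \<and> y \<noteq> 0 \<and> x * inverse y \<in> comm_subgrp)"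

lemma abel_eq_refl [simp]: "abel_eq x x"
  by (auto simp: abel_eq_def intro: comm_subgrp.one)

lemma abel_eq_sym: "abel_eq x y \<Longrightarrow> abel_eq y x"
  using comm_subgrp.inv[of "x * inverse y"]
  by (auto simp: abel_eq_def nonzero_inverse_mult_distrib)

lemma abel_eq_trans [trans]: "abel_eq x y \<Longrightarrow> abel_eq y z \<Longrightarrow> abel_eq x z"
  using comm_subgrp.mult[of "x * inverse y" "y * inverse z"]
  by (auto simp: abel_eq_def mult.assoc)

lemma abel_eq_mult_right: "abel_eq x y \<Longrightarrow> abel_eq (x * z) (y * z)"
  by (cases "z = 0") (auto simp: abel_eq_def nonzero_inverse_mult_distrib mult.assoc)

lemma abel_eq_mult_left:
  assumes "abel_eq x y"
  shows "abel_eq (z * x) (z * y)"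
proof (cases "z = 0 \<or> x = 0")
  case False
  then have "y \<noteq> 0" "x * inverse y \<in> comm_subgrp" using assms by (auto simp: abel_eq_def)
  moreover have "z * x * inverse (z * y) = z * (x * inverse y) * inverse z"
    using False \<open>y \<noteq> 0\<close> by (simp add: nonzero_inverse_mult_distrib mult.assoc)
  ultimately show ?thesis using False comm_subgrp_conj by (auto simp: abel_eq_def)
qed (use assms in \<open>auto simp: abel_eq_def\<close>)

lemma abel_eq_commute: "abel_eq ((x::'a::division_ring) * y) (y * x)"
proof (cases "x = 0 \<or> y = 0")
  case False
  then have "x * y * inverse x * inverse y \<in> comm_subgrp" by (auto intro: comm_subgrp.comm)
  moreover have "x * y * inverse (y * x) = x * y * inverse x * inverse y"
    using False by (simp add: nonzero_inverse_mult_distrib mult.assoc)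
  ultimately show ?thesis using False by (simp add: abel_eq_def)
qed (auto simp: abel_eq_def)

lemma abel_eq_prod_list_perm:
  "mset xs = mset ys \<Longrightarrow> abel_eq (prod_list (xs::'a::division_ring list)) (prod_list ys)"
proof (induction xs arbitrary: ys)
  case (Cons x xs)
  then obtain ys1 ys2 where ys: "ys = ys1 @ x # ys2"
    by (metis list.set_intros(1) set_mset_mset split_list)
  then have "abel_eq (prod_list xs) (prod_list (ys1 @ ys2))" using Cons by (intro Cons.IH) simp
  then have "abel_eq (x * prod_list xs) (x * prod_list ys1 * prod_list ys2)"
    by (simp add: abel_eq_mult_left mult.assoc)
  also have "abel_eq \<dots> (prod_list ys1 * x * prod_list ys2)"
    by (rule abel_eq_mult_right[OF abel_eq_commute])
  finally show ?case using ys by (simp add: mult.assoc)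
qed simp

lemma comm_subgrp_coset_subset:
  assumes "x \<noteq> 0" "y \<noteq> 0" "x * inverse y \<in> comm_subgrp"
  shows "{x * h |h. h \<in> comm_subgrp} \<subseteq> {y * h |h. h \<in> comm_subgrp}"
proof safe
  fix h :: 'a assume h: "h \<in> comm_subgrp"
  have "inverse y * (x * inverse y) * inverse (inverse y) \<in> comm_subgrp"
    using assms by (intro comm_subgrp_conj) auto
  moreover have "inverse y * (x * inverse y) * inverse (inverse y) = inverse y * x"
    using assms by (simp add: mult.assoc)
  ultimately have "inverse y * x * h \<in> comm_subgrp" using h by (simp add: comm_subgrp.mult)
  moreover have "x * h = y * (inverse y * x * h)" using assms by (simp add: mult.assoc)
  ultimately show "\<exists>h'. x * h = y * h' \<and> h' \<in> comm_subgrp" by blast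
qed

lemma cls_eqI: "abel_eq x y \<Longrightarrow> cls x = cls y"
  using comm_subgrp_coset_subset[of x y] comm_subgrp_coset_subset[of y x] abel_eq_sym[of x y]
  by (auto simp: abel_eq_def cls_def)

lemma cls_mult_cls: "cls_mult (cls a) (cls b) = cls ((a::'a::division_ring) * b)"
proof (cases "a = 0 \<or> b = 0")
  case True
  then show ?thesis by (auto simp: cls_mult_def cls_def intro: comm_subgrp.one)
next
  case False
  show ?thesis
  proof (intro set_eqI iffI)
    fix z assume "z \<in> cls_mult (cls a) (cls b)"
    then obtain h1 h2 where h: "h1 \<in> comm_subgrp" "h2 \<in> comm_subgrp" "z = a * h1 * (b * h2)"
      using False by (auto simp: cls_mult_def cls_def)
    have "inverse b * h1 * inverse (inverse b) \<in> comm_subgrp"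
      using comm_subgrp_conj[of h1 "inverse b"] h False by simp
    moreover have "a * h1 * (b * h2) = (a * b) * ((inverse b * h1 * b) * h2)"
      using False by (simp add: mult.assoc)
    ultimately show "z \<in> cls (a * b)" using h False
      by (auto simp: cls_def intro!: comm_subgrp.mult)
  next
    fix z assume "z \<in> cls (a * b)"
    then obtain h where h: "h \<in> comm_subgrp" "z = (a * 1) * (b * h)"
      using False by (auto simp: cls_def mult.assoc)
    moreover have "a * 1 \<in> cls a" "b * h \<in> cls b"
      using False h comm_subgrp.one by (auto simp: cls_def)
    ultimately show "z \<in> cls_mult (cls a) (cls b)" unfolding cls_mult_def by blast
  qed
qed

section \<open>A determinant computed by column elimination\<close>

text \<open>An \<open>m \<times> m\<close> matrix is given by the list of its \<open>m\<close> columns, a column being a function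
  on the row indices \<open>0..m-1\<close>. The value is a representative of the Dieudonne determinant.\<close>

definition col_add :: "(nat \<Rightarrow> 'a::ring) \<Rightarrow> (nat \<Rightarrow> 'a) \<Rightarrow> 'a \<Rightarrow> nat \<Rightarrow> 'a" where
  "col_add v w s = (\<lambda>t. v t + w t * s)"

definition col_scale :: "(nat \<Rightarrow> 'a::ring) \<Rightarrow> 'a \<Rightarrow> nat \<Rightarrow> 'a" where
  "col_scale v s = (\<lambda>t. v t * s)"

definition elim_col :: "nat \<Rightarrow> (nat \<Rightarrow> 'a::division_ring) list \<Rightarrow> nat \<Rightarrow> nat \<Rightarrow> nat \<Rightarrow> 'a" where
  "elim_col m vs k x = col_add (vs!x) (vs!k) (- (inverse ((vs!k) m) * (vs!x) m))"

definition minor_cols :: "nat \<Rightarrow> (nat \<Rightarrow> 'a::division_ring) list \<Rightarrow> nat \<Rightarrow> (nat \<Rightarrow> 'a) list" where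
  "minor_cols m vs k = map (\<lambda>x. elim_col m vs k (if x = k then m else x)) [0..<m]"

text \<open>Expansion along the last row \<open>m\<close>: the pivot column \<open>k\<close> clears that row, and in the minor
  the last column takes the place of column \<open>k\<close>, a transposition unless \<open>k = m\<close>.\<close>

fun col_det :: "nat \<Rightarrow> (nat \<Rightarrow> 'a::division_ring) list \<Rightarrow> 'a" where
  "col_det 0 vs = 1"
| "col_det (Suc m) vs = (if \<exists>k\<le>m. (vs!k) m \<noteq> 0 then
      (let k = LEAST k. k \<le> m \<and> (vs!k) m \<noteq> 0 in
       (if k = m then 1 else -1) * col_det m (minor_cols m vs k) * (vs!k) m)
     else 0)"

declare col_det.simps(2) [simp del]

definition pivot_expansion :: "nat \<Rightarrow> (nat \<Rightarrow> 'a::division_ring) list \<Rightarrow> nat \<Rightarrow> 'a" where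
  "pivot_expansion m vs k = (if k = m then 1 else -1) * col_det m (minor_cols m vs k) * (vs!k) m"

lemma length_minor_cols [simp]: "length (minor_cols m vs k) = m"
  by (simp add: minor_cols_def)

lemma nth_minor_cols: "x < m \<Longrightarrow> minor_cols m vs k ! x = elim_col m vs k (if x = k then m else x)"
  by (simp add: minor_cols_def)

lemma elim_col_pivot: "(vs!k) m \<noteq> 0 \<Longrightarrow> elim_col m vs k k = (\<lambda>t. 0)"
  by (auto simp: elim_col_def col_add_def)

lemma elim_col_cleared: "(vs!x) m = 0 \<Longrightarrow> elim_col m vs k x = vs!x"
  by (simp add: elim_col_def col_add_def)

lemma col_det_Suc:
  "col_det (Suc m) vs = (if \<exists>k\<le>m. (vs!k) m \<noteq> 0
     then pivot_expansion m vs (LEAST k. k \<le> m \<and> (vs!k) m \<noteq> 0) else 0)"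
  by (auto simp: col_det.simps(2) pivot_expansion_def Let_def)

lemma col_det_Suc_least:
  assumes "\<exists>k\<le>m. (vs!k) m \<noteq> 0"
  obtains k where "k \<le> m" "(vs!k) m \<noteq> 0" "col_det (Suc m) vs = pivot_expansion m vs k"
  using assms LeastI_ex[of "\<lambda>k. k \<le> m \<and> (vs!k) m \<noteq> 0"] by (auto simp: col_det_Suc)

lemma col_det_cong: "(\<And>x t. x < m \<Longrightarrow> t < m \<Longrightarrow> (vs!x) t = (ws!x) t) \<Longrightarrow> col_det m vs = col_det m ws"
proof (induction m arbitrary: vs ws)
  case (Suc m)
  have row: "\<And>x. x \<le> m \<Longrightarrow> (vs!x) m = (ws!x) m" using Suc.prems by auto
  define k where "k = (LEAST k. k \<le> m \<and> (vs!k) m \<noteq> 0)"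
  have "(LEAST k. k \<le> m \<and> (ws!k) m \<noteq> 0) = k"
    unfolding k_def by (rule arg_cong[where f = Least]) (use row in auto)
  moreover have "k \<le> m \<Longrightarrow> col_det m (minor_cols m vs k) = col_det m (minor_cols m ws k)"
    by (rule Suc.IH) (use Suc.prems row in \<open>auto simp: nth_minor_cols elim_col_def col_add_def\<close>)
  moreover have "(\<exists>k\<le>m. (vs!k) m \<noteq> 0) \<Longrightarrow> k \<le> m"
    unfolding k_def by (metis (mono_tags, lifting) LeastI)
  ultimately show ?case using row
    by (auto simp: col_det_Suc k_def[symmetric] pivot_expansion_def)
qed simp

lemma col_det_Suc_sole_pivot:
  assumes "j \<le> m" "\<And>x. x \<le> m \<Longrightarrow> x \<noteq> j \<Longrightarrow> (vs!x) m = 0"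
  shows "col_det (Suc m) vs = pivot_expansion m vs j"
proof (cases "(vs!j) m = 0")
  case True
  then show ?thesis using assms by (auto simp: col_det_Suc pivot_expansion_def)
next
  case False
  then have "(LEAST k. k \<le> m \<and> (vs!k) m \<noteq> 0) = j"
    using assms by (intro Least_equality) auto
  then show ?thesis using False assms(1) by (auto simp: col_det_Suc)
qed

lemma minor_cols_cong:
  assumes "\<And>x. x \<le> m \<Longrightarrow> x \<noteq> k \<Longrightarrow> elim_col m vs' k x = elim_col m vs k x"
  shows "minor_cols m vs' k = minor_cols m vs k"
  by (rule nth_equalityI) (use assms in \<open>auto simp: nth_minor_cols\<close>)

lemma col_det_Suc_update_sole_pivot:
  assumes "j < length vs" "j \<le> m" "\<And>x. x \<le> m \<Longrightarrow> x \<noteq> j \<Longrightarrow> (vs!x) m = 0"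
  shows "col_det (Suc m) (vs[j := w]) = (if j = m then 1 else -1) * col_det m (minor_cols m vs j) * w m"
proof -
  have "minor_cols m (vs[j := w]) j = minor_cols m vs j"
    using assms by (intro minor_cols_cong) (simp add: elim_col_cleared)
  moreover have "col_det (Suc m) (vs[j := w]) = pivot_expansion m (vs[j := w]) j"
    using assms by (intro col_det_Suc_sole_pivot) auto
  ultimately show ?thesis using assms(1) by (simp add: pivot_expansion_def)
qed

lemma nth_minor_cols_pos:
  "k \<le> m \<Longrightarrow> x \<le> m \<Longrightarrow> x \<noteq> k \<Longrightarrow> minor_cols m vs k ! (if x = m then k else x) = elim_col m vs k x"
  by (auto simp: nth_minor_cols)

lemma minor_cols_update:
  assumes "k \<le> m" "j \<le> m" "j \<noteq> k"
    and "\<And>x. x \<le> m \<Longrightarrow> elim_col m vs' k x = (if x = j then w else elim_col m vs k x)"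
  shows "minor_cols m vs' k = (minor_cols m vs k)[(if j = m then k else j) := w]"
proof (rule nth_equalityI)
  fix y assume "y < length (minor_cols m vs' k)"
  then have "y < m" by simp
  then have "(if y = k then m else y) = j \<longleftrightarrow> y = (if j = m then k else j)"
    using assms(1-3) by auto
  then show "minor_cols m vs' k ! y = (minor_cols m vs k)[(if j = m then k else j) := w] ! y"
    using \<open>y < m\<close> assms by (auto simp: nth_minor_cols nth_list_update)
qed simp

definition col_add_invariant :: "nat \<Rightarrow> ((nat \<Rightarrow> 'a::division_ring) list \<Rightarrow> 'a) \<Rightarrow> bool" where
  "col_add_invariant m D \<longleftrightarrow> (\<forall>vs i j s. length vs = m \<longrightarrow> i < m \<longrightarrow> j < m \<longrightarrow> i \<noteq> j \<longrightarrow>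
      abel_eq (D (vs[j := col_add (vs!j) (vs!i) s])) (D vs))"

definition col_scale_multiplicative :: "nat \<Rightarrow> ((nat \<Rightarrow> 'a::division_ring) list \<Rightarrow> 'a) \<Rightarrow> bool" where
  "col_scale_multiplicative m D \<longleftrightarrow> (\<forall>vs j s. length vs = m \<longrightarrow> j < m \<longrightarrow> s \<noteq> 0 \<longrightarrow>
      abel_eq (D (vs[j := col_scale (vs!j) s])) (D vs * s))"

lemma col_add_invariantD:
  "col_add_invariant m D \<Longrightarrow> length vs = m \<Longrightarrow> i < m \<Longrightarrow> j < m \<Longrightarrow> i \<noteq> j \<Longrightarrow>
    abel_eq (D (vs[j := col_add (vs!j) (vs!i) s])) (D vs)"
  unfolding col_add_invariant_def by blast

lemma col_scale_multiplicativeD: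
  "col_scale_multiplicative m D \<Longrightarrow> length vs = m \<Longrightarrow> j < m \<Longrightarrow> s \<noteq> 0 \<Longrightarrow>
    abel_eq (D (vs[j := col_scale (vs!j) s])) (D vs * s)"
  unfolding col_scale_multiplicative_def by blast

lemma col_swap_negates:
  assumes add: "col_add_invariant m D" and scale: "col_scale_multiplicative m D"
    and len: "length vs = m" and ij: "i < m" "j < m" "i \<noteq> j"
  shows "abel_eq (D (vs[i := vs!j, j := vs!i])) (- D vs)"
proof -
  define v1 where "v1 = vs[j := col_add (vs!j) (vs!i) 1]"
  define v2 where "v2 = v1[i := col_add (v1!i) (v1!j) (-1)]"
  define v3 where "v3 = v2[j := col_add (v2!j) (v2!i) 1]"
  define v4 where "v4 = v3[i := col_scale (v3!i) (-1)]"
  have "v4 = vs[i := vs!j, j := vs!i]"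
    by (rule nth_equalityI) (use ij len in \<open>auto simp: v4_def v3_def v2_def v1_def
      nth_list_update col_add_def col_scale_def fun_eq_iff algebra_simps\<close>)
  moreover have "abel_eq (D v4) (D v3 * (-1))"
    unfolding v4_def by (rule col_scale_multiplicativeD[OF scale]) (use len ij in \<open>simp_all add: v1_def v2_def v3_def\<close>)
  moreover have "abel_eq (D v3) (D v2)"
    unfolding v3_def by (rule col_add_invariantD[OF add]) (use len ij in \<open>simp_all add: v1_def v2_def\<close>)
  moreover have "abel_eq (D v2) (D v1)"
    unfolding v2_def by (rule col_add_invariantD[OF add]) (use len ij in \<open>simp_all add: v1_def\<close>)
  moreover have "abel_eq (D v1) (D vs)"
    unfolding v1_def by (rule col_add_invariantD[OF add len ij])
  ultimately show ?thesis by (metis abel_eq_trans abel_eq_mult_right mult_minus1_right)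
qed

definition col_add_set :: "(nat \<Rightarrow> 'a::ring) list \<Rightarrow> nat \<Rightarrow> nat set \<Rightarrow> (nat \<Rightarrow> 'a) \<Rightarrow> (nat \<Rightarrow> 'a) list" where
  "col_add_set vs i T f = map (\<lambda>j. if j \<in> T then col_add (vs!j) (vs!i) (f j) else vs!j) [0..<length vs]"

lemma length_col_add_set [simp]: "length (col_add_set vs i T f) = length vs"
  by (simp add: col_add_set_def)

lemma nth_col_add_set:
  "j < length vs \<Longrightarrow> col_add_set vs i T f ! j = (if j \<in> T then col_add (vs!j) (vs!i) (f j) else vs!j)"
  by (simp add: col_add_set_def)

lemma col_add_invariant_add_set:
  assumes add: "col_add_invariant m D"
    and len: "length vs = m" and i: "i < m" and T: "T \<subseteq> {..<m}" "i \<notin> T"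
  shows "abel_eq (D (col_add_set vs i T f)) (D vs)"
proof -
  have "finite T" using T finite_subset by blast
  then show ?thesis using T
  proof (induction T rule: finite_induct)
    case empty
    have "col_add_set vs i {} f = vs" by (rule nth_equalityI) (auto simp: nth_col_add_set)
    then show ?case by simp
  next
    case (insert a T)
    let ?ws = "col_add_set vs i T f"
    have a: "a < m" "a \<noteq> i" using insert.prems by auto
    have "col_add_set vs i (insert a T) f = ?ws[a := col_add (?ws!a) (?ws!i) (f a)]"
      by (rule nth_equalityI) (use insert.hyps insert.prems a i len in \<open>auto simp: nth_col_add_set nth_list_update\<close>)
    also have "abel_eq (D \<dots>) (D ?ws)"
      by (rule col_add_invariantD[OF add]) (use len a i in auto)
    finally show ?case using insert abel_eq_trans by auto
  qed
qed

lemma elim_col_change_pivot: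
  assumes "(vs!k) m \<noteq> 0" "(vs!k') m \<noteq> 0"
  shows "elim_col m vs k' x =
    col_add (elim_col m vs k x) (elim_col m vs k k') (- (inverse ((vs!k') m) * (vs!x) m))"
  using assms by (simp add: elim_col_def col_add_def fun_eq_iff algebra_simps)

context
  fixes m :: nat
  assumes add: "col_add_invariant m (col_det m :: (nat \<Rightarrow> 'a::division_ring) list \<Rightarrow> 'a)"
    and scale: "col_scale_multiplicative m (col_det m :: (nat \<Rightarrow> 'a) list \<Rightarrow> 'a)"
begin

text \<open>Moving the pivot from \<open>k\<close> to \<open>k'\<close> turns the minor for \<open>k\<close> into the one for \<open>k'\<close> by
  column additions, a transposition if \<open>k' < m\<close>, and the scaling of one column by
  \<open>-q\<^sup>-\<^sup>1p\<close>, where \<open>p\<close>, \<open>q\<close> are the two pivot entries.\<close>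

lemma col_det_minor_change_to_last:
  fixes vs :: "(nat \<Rightarrow> 'a) list"
  assumes len: "length vs = Suc m" and k: "k < m" and p: "(vs!k) m \<noteq> 0" and q: "(vs!m) m \<noteq> 0"
  shows "abel_eq (col_det m (minor_cols m vs m))
                 (col_det m (minor_cols m vs k) * - (inverse ((vs!m) m) * (vs!k) m))"
proof -
  define B where "B = minor_cols m vs k"
  define \<mu> where "\<mu> = - (inverse ((vs!m) m) * (vs!k) m)"
  define C where "C = col_add_set B k ({..<m} - {k}) (\<lambda>x. - (inverse ((vs!m) m) * (vs!x) m))"
  have lB: "length B = m" by (simp add: B_def)
  have Ck: "C!k = B!k" using k by (simp add: C_def nth_col_add_set lB)
  have "minor_cols m vs m = C[k := col_scale (C!k) \<mu>]"
  proof (rule nth_equalityI)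
    fix y assume "y < length (minor_cols m vs m)"
    then have y: "y < m" by simp
    show "minor_cols m vs m ! y = C[k := col_scale (C!k) \<mu>] ! y"
    proof (cases "y = k")
      case True
      then show ?thesis using y k Ck elim_col_change_pivot[OF p q, of k] elim_col_pivot[OF p]
        by (simp add: B_def C_def nth_minor_cols lB \<mu>_def col_add_def col_scale_def)
    next
      case False
      then show ?thesis using y k elim_col_change_pivot[OF p q, of y]
        by (simp add: B_def C_def nth_minor_cols lB nth_col_add_set)
    qed
  qed (simp add: C_def lB)
  also have "abel_eq (col_det m \<dots>) (col_det m C * \<mu>)"
    by (intro col_scale_multiplicativeD[OF scale]) (use p q in \<open>simp_all add: C_def lB k \<mu>_def\<close>)
  also have "abel_eq \<dots> (col_det m B * \<mu>)"
    unfolding C_def by (intro abel_eq_mult_right col_add_invariant_add_set[OF add lB k]) auto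
  finally show ?thesis by (simp add: B_def \<mu>_def)
qed

lemma col_det_minor_change_inner:
  fixes vs :: "(nat \<Rightarrow> 'a) list"
  assumes len: "length vs = Suc m" and kk': "k < k'" "k' < m"
    and p: "(vs!k) m \<noteq> 0" and q: "(vs!k') m \<noteq> 0"
  shows "abel_eq (- col_det m (minor_cols m vs k'))
                 (col_det m (minor_cols m vs k) * - (inverse ((vs!k') m) * (vs!k) m))"
proof -
  define B where "B = minor_cols m vs k"
  define \<mu> where "\<mu> = - (inverse ((vs!k') m) * (vs!k) m)"
  define g where "g = (\<lambda>y. - (inverse ((vs!k') m) * (vs!(if y = k then m else y)) m))"
  define C where "C = col_add_set B k' ({..<m} - {k'}) g"
  define D where "D = C[k := C!k', k' := C!k]"
  have lB: "length B = m" by (simp add: B_def)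
  have lC: "length C = m" by (simp add: C_def lB)
  have Ck': "C!k' = elim_col m vs k k'" using kk' by (simp add: C_def B_def nth_col_add_set nth_minor_cols)
  have "minor_cols m vs k' = D[k := col_scale (D!k) \<mu>]"
  proof (rule nth_equalityI)
    fix y assume "y < length (minor_cols m vs k')"
    then have y: "y < m" by simp
    consider "y = k" | "y = k'" | "y \<noteq> k" "y \<noteq> k'" by blast
    then show "minor_cols m vs k' ! y = D[k := col_scale (D!k) \<mu>] ! y"
    proof cases
      case 1
      then show ?thesis using y kk' Ck' elim_col_change_pivot[OF p q, of k] elim_col_pivot[OF p]
        by (simp add: D_def lC nth_minor_cols \<mu>_def col_add_def col_scale_def)
    qed (use y kk' elim_col_change_pivot[OF p q, of m] elim_col_change_pivot[OF p q, of y] in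
      \<open>simp_all add: D_def lC nth_minor_cols C_def nth_col_add_set lB B_def g_def\<close>)
  qed (simp add: D_def lC)
  also have "abel_eq (col_det m \<dots>) (col_det m D * \<mu>)"
    by (intro col_scale_multiplicativeD[OF scale]) (use p q kk' in \<open>simp_all add: D_def lC \<mu>_def\<close>)
  also have "abel_eq \<dots> (- col_det m C * \<mu>)"
    unfolding D_def using kk' by (intro abel_eq_mult_right col_swap_negates[OF add scale lC]) auto
  also have "abel_eq \<dots> (- col_det m B * \<mu>)"
    unfolding C_def minus_mult_left
    by (intro abel_eq_mult_right abel_eq_mult_left[where z = "-1", simplified]
        col_add_invariant_add_set[OF add lB]) (use kk' in auto)
  finally have "abel_eq (col_det m (minor_cols m vs k')) (- col_det m B * \<mu>)" .
  then show ?thesis using abel_eq_mult_left[where z = "-1"] by (fastforce simp: B_def \<mu>_def)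
qed

lemma pivot_expansion_indep_less:
  fixes vs :: "(nat \<Rightarrow> 'a) list"
  assumes len: "length vs = Suc m" and kk': "k < k'" "k' \<le> m"
    and p: "(vs!k) m \<noteq> 0" and q: "(vs!k') m \<noteq> 0"
  shows "abel_eq (pivot_expansion m vs k') (pivot_expansion m vs k)"
proof -
  define B where "B = minor_cols m vs k"
  define \<mu> where "\<mu> = - (inverse ((vs!k') m) * (vs!k) m)"
  have "abel_eq ((if k' = m then 1 else -1) * col_det m (minor_cols m vs k')) (col_det m B * \<mu>)"
    using col_det_minor_change_to_last[OF len _ p] col_det_minor_change_inner[OF len kk'(1) _ p q]
      kk' q by (cases "k' = m") (auto simp: B_def \<mu>_def)
  then have "abel_eq (pivot_expansion m vs k') (col_det m B * \<mu> * (vs!k') m)"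
    unfolding pivot_expansion_def by (rule abel_eq_mult_right)
  also have "col_det m B * \<mu> * (vs!k') m = prod_list [-1, col_det m B, inverse ((vs!k') m), (vs!k) m, (vs!k') m]"
    by (simp add: \<mu>_def mult.assoc)
  also have "abel_eq \<dots> (prod_list [-1, col_det m B, (vs!k) m, inverse ((vs!k') m), (vs!k') m])"
    by (rule abel_eq_prod_list_perm) simp
  also have "\<dots> = pivot_expansion m vs k"
    using kk' q by (simp add: pivot_expansion_def B_def mult.assoc)
  finally show ?thesis .
qed

lemma col_det_any_pivot:
  fixes vs :: "(nat \<Rightarrow> 'a) list"
  assumes len: "length vs = Suc m" and k: "k \<le> m" "(vs!k) m \<noteq> 0"
  shows "abel_eq (col_det (Suc m) vs) (pivot_expansion m vs k)"
proof -
  obtain k0 where k0: "k0 \<le> m" "(vs!k0) m \<noteq> 0" "col_det (Suc m) vs = pivot_expansion m vs k0"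
    using k col_det_Suc_least by blast
  show ?thesis unfolding k0(3)
    using pivot_expansion_indep_less[OF len _ _ k0(2) k(2)]
      pivot_expansion_indep_less[OF len _ _ k(2) k0(2)] k k0
    by (cases k0 k rule: linorder_cases) (auto intro: abel_eq_sym)
qed

lemma col_det_minor_col_add:
  fixes vs :: "(nat \<Rightarrow> 'a) list"
  assumes len: "length vs = Suc m" and ij: "i \<le> m" "j \<le> m" "i \<noteq> j"
    and k: "k \<le> m" "k \<noteq> j" "(vs!k) m \<noteq> 0"
  shows "abel_eq (col_det m (minor_cols m (vs[j := col_add (vs!j) (vs!i) s]) k))
                 (col_det m (minor_cols m vs k))"
proof -
  let ?vs' = "vs[j := col_add (vs!j) (vs!i) s]"
  have elim: "\<And>x. x \<le> m \<Longrightarrow> elim_col m ?vs' k x =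
      (if x = j then col_add (elim_col m vs k j) (elim_col m vs k i) s else elim_col m vs k x)"
    using len ij k by (auto simp: nth_list_update elim_col_def col_add_def fun_eq_iff algebra_simps)
  show ?thesis
  proof (cases "i = k")
    case True
    then have "minor_cols m ?vs' k = minor_cols m vs k"
      using elim elim_col_pivot[OF k(3)] by (intro minor_cols_cong) (simp add: col_add_def)
    then show ?thesis by simp
  next
    case False
    let ?B = "minor_cols m vs k" and ?pos = "\<lambda>x. if x = m then k else x"
    have "minor_cols m ?vs' k = ?B[?pos j := col_add (?B ! ?pos j) (?B ! ?pos i) s]"
      using k ij False by (subst minor_cols_update[OF k(1) _ k(2)[symmetric] elim])
        (simp_all add: nth_minor_cols_pos)
    also have "abel_eq (col_det m \<dots>) (col_det m ?B)"
      using k ij False by (intro col_add_invariantD[OF add]) auto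
    finally show ?thesis .
  qed
qed

lemma col_det_minor_col_scale:
  fixes vs :: "(nat \<Rightarrow> 'a) list"
  assumes len: "length vs = Suc m" and j: "j \<le> m" and s: "s \<noteq> 0" and k: "k \<le> m" "k \<noteq> j"
  shows "abel_eq (col_det m (minor_cols m (vs[j := col_scale (vs!j) s]) k))
                 (col_det m (minor_cols m vs k) * s)"
proof -
  let ?B = "minor_cols m vs k" and ?pos = "\<lambda>x. if x = m then k else x"
  have "minor_cols m (vs[j := col_scale (vs!j) s]) k = ?B[?pos j := col_scale (?B ! ?pos j) s]"
    using len k j
    by (subst minor_cols_update[OF k(1) _ k(2)[symmetric]])
      (auto simp: nth_list_update nth_minor_cols_pos elim_col_def col_add_def col_scale_def algebra_simps)
  also have "abel_eq (col_det m \<dots>) (col_det m ?B * s)"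
    using k j s by (intro col_scale_multiplicativeD[OF scale]) auto
  finally show ?thesis .
qed

text \<open>In the inductive step a pivot \<open>k\<close> outside the modified column \<open>j\<close> is used when possible;
  otherwise column \<open>j\<close> is the only candidate pivot on both sides.\<close>

lemma col_add_invariant_Suc: "col_add_invariant (Suc m) (col_det (Suc m) :: (nat \<Rightarrow> 'a) list \<Rightarrow> 'a)"
  unfolding col_add_invariant_def
proof (intro allI impI)
  fix vs :: "(nat \<Rightarrow> 'a) list" and i j s
  assume len: "length vs = Suc m" and ij: "i < Suc m" "j < Suc m" "i \<noteq> j"
  define vs' where "vs' = vs[j := col_add (vs!j) (vs!i) s]"
  show "abel_eq (col_det (Suc m) vs') (col_det (Suc m) vs)"
  proof (cases "\<exists>k\<le>m. k \<noteq> j \<and> (vs!k) m \<noteq> 0")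
    case True
    then obtain k where k: "k \<le> m" "k \<noteq> j" "(vs!k) m \<noteq> 0" by blast
    have vk: "vs'!k = vs!k" using k by (simp add: vs'_def)
    have "abel_eq (col_det m (minor_cols m vs' k)) (col_det m (minor_cols m vs k))"
      unfolding vs'_def by (rule col_det_minor_col_add[OF len _ _ ij(3) k]) (use ij in auto)
    then have "abel_eq (pivot_expansion m vs' k) (pivot_expansion m vs k)"
      unfolding pivot_expansion_def vk by (intro abel_eq_mult_left abel_eq_mult_right)
    then show ?thesis
      using col_det_any_pivot[of vs' k] col_det_any_pivot[OF len k(1,3)] vk k len
      by (metis abel_eq_sym abel_eq_trans length_list_update vs'_def)
  next
    case False
    then have sole: "\<And>x. x \<le> m \<Longrightarrow> x \<noteq> j \<Longrightarrow> (vs!x) m = 0" by auto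
    have "col_det (Suc m) (vs[j := w]) = (if j = m then 1 else -1) * col_det m (minor_cols m vs j) * w m"
      for w by (rule col_det_Suc_update_sole_pivot) (use len ij sole in auto)
    from this[of "col_add (vs!j) (vs!i) s"] this[of "vs!j"] show ?thesis
      using sole[of i] ij by (simp add: vs'_def col_add_def)
  qed
qed

lemma col_scale_multiplicative_Suc:
  "col_scale_multiplicative (Suc m) (col_det (Suc m) :: (nat \<Rightarrow> 'a) list \<Rightarrow> 'a)"
  unfolding col_scale_multiplicative_def
proof (intro allI impI)
  fix vs :: "(nat \<Rightarrow> 'a) list" and j and s :: 'a
  assume len: "length vs = Suc m" and j: "j < Suc m" and s: "s \<noteq> 0"
  define vs' where "vs' = vs[j := col_scale (vs!j) s]"
  show "abel_eq (col_det (Suc m) vs') (col_det (Suc m) vs * s)"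
  proof (cases "\<exists>k\<le>m. k \<noteq> j \<and> (vs!k) m \<noteq> 0")
    case True
    then obtain k where k: "k \<le> m" "k \<noteq> j" "(vs!k) m \<noteq> 0" by blast
    let ?sgn = "if k = m then 1 else -1 :: 'a" and ?B = "minor_cols m vs k"
    have vk: "vs'!k = vs!k" using k by (simp add: vs'_def)
    have "abel_eq (col_det m (minor_cols m vs' k)) (col_det m ?B * s)"
      unfolding vs'_def by (rule col_det_minor_col_scale[OF len _ s k(1,2)]) (use j in auto)
    then have "abel_eq (pivot_expansion m vs' k) (?sgn * (col_det m ?B * s) * (vs!k) m)"
      unfolding pivot_expansion_def vk by (intro abel_eq_mult_left abel_eq_mult_right)
    also have "\<dots> = (?sgn * col_det m ?B) * (s * (vs!k) m)"
      by (simp add: mult.assoc)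
    also have "abel_eq \<dots> ((?sgn * col_det m ?B) * ((vs!k) m * s))"
      by (rule abel_eq_mult_left[OF abel_eq_commute])
    also have "\<dots> = pivot_expansion m vs k * s"
      by (simp add: pivot_expansion_def mult.assoc)
    finally show ?thesis
      using col_det_any_pivot[of vs' k] col_det_any_pivot[OF len k(1,3)] vk k len
      by (metis abel_eq_sym abel_eq_trans abel_eq_mult_right length_list_update vs'_def)
  next
    case False
    then have sole: "\<And>x. x \<le> m \<Longrightarrow> x \<noteq> j \<Longrightarrow> (vs!x) m = 0" by auto
    have "col_det (Suc m) (vs[j := w]) = (if j = m then 1 else -1) * col_det m (minor_cols m vs j) * w m"
      for w by (rule col_det_Suc_update_sole_pivot) (use len j sole in auto)
    from this[of "col_scale (vs!j) s"] this[of "vs!j"] show ?thesis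
      by (simp add: vs'_def col_scale_def mult.assoc)
  qed
qed

end

lemma col_det_invariant:
  "col_add_invariant m (col_det m :: (nat \<Rightarrow> 'a::division_ring) list \<Rightarrow> 'a) \<and>
   col_scale_multiplicative m (col_det m :: (nat \<Rightarrow> 'a) list \<Rightarrow> 'a)"
proof (induction m)
  case 0
  then show ?case by (simp add: col_add_invariant_def col_scale_multiplicative_def)
next
  case (Suc m)
  then show ?case using col_add_invariant_Suc col_scale_multiplicative_Suc by blast
qed

lemma col_det_col_add:
  "length vs = m \<Longrightarrow> i < m \<Longrightarrow> j < m \<Longrightarrow> i \<noteq> j \<Longrightarrow>
    abel_eq (col_det m (vs[j := col_add (vs!j) (vs!i) s])) (col_det m vs)"
  using col_det_invariant col_add_invariantD by blast

lemma col_det_lower_triangular: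
  "length vs = m \<Longrightarrow> (\<And>x t. x < m \<Longrightarrow> t < x \<Longrightarrow> (vs!x) t = 0) \<Longrightarrow> (\<And>x. x < m \<Longrightarrow> (vs!x) x \<noteq> 0) \<Longrightarrow>
     abel_eq (col_det m vs) (prod_list (map (\<lambda>x. (vs!x) x) [0..<m]))"
proof (induction m arbitrary: vs)
  case (Suc m)
  have expand: "abel_eq (col_det (Suc m) vs) (pivot_expansion m vs m)"
    using col_det_invariant Suc.prems by (intro col_det_any_pivot) auto
  have minor: "col_det m (minor_cols m vs m) = col_det m (butlast vs)"
    by (rule col_det_cong) (use Suc.prems in \<open>auto simp: nth_minor_cols elim_col_def col_add_def nth_butlast\<close>)
  have diag: "map (\<lambda>x. (butlast vs ! x) x) [0..<m] = map (\<lambda>x. (vs!x) x) [0..<m]"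
    using Suc.prems by (auto simp: nth_butlast)
  have "abel_eq (col_det m (butlast vs)) (prod_list (map (\<lambda>x. (butlast vs ! x) x) [0..<m]))"
    using Suc.prems by (intro Suc.IH) (auto simp: nth_butlast)
  then have "abel_eq (pivot_expansion m vs m) (prod_list (map (\<lambda>x. (vs!x) x) [0..<m]) * (vs!m) m)"
    unfolding pivot_expansion_def minor diag by (simp add: abel_eq_mult_right)
  then show ?case using expand by (simp add: abel_eq_trans)
qed simp

section \<open>Matrices and the Dieudonne determinant\<close>

definition cols :: "nat \<Rightarrow> (nat \<Rightarrow> nat \<Rightarrow> 'a) \<Rightarrow> (nat \<Rightarrow> 'a) list" where
  "cols n A = map (\<lambda>j t. A (Suc t) j) [1..<Suc n]"

definition elim_det :: "nat \<Rightarrow> (nat \<Rightarrow> nat \<Rightarrow> 'a::division_ring) \<Rightarrow> 'a" where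
  "elim_det n A = col_det n (cols n A)"

definition add_col :: "(nat \<Rightarrow> nat \<Rightarrow> 'a::ring) \<Rightarrow> nat \<Rightarrow> nat \<Rightarrow> 'a \<Rightarrow> nat \<Rightarrow> nat \<Rightarrow> 'a" where
  "add_col A p q a = (\<lambda>i k. A i k + (if k = q then A i p * a else 0))"

definition lower_triangular :: "nat \<Rightarrow> (nat \<Rightarrow> nat \<Rightarrow> 'a::zero) \<Rightarrow> bool" where
  "lower_triangular n L \<longleftrightarrow> (\<forall>i\<in>{1..n}. \<forall>k\<in>{1..n}. i < k \<longrightarrow> L i k = 0)"

lemma length_cols [simp]: "length (cols n A) = n"
  by (simp add: cols_def)

lemma nth_cols: "x < n \<Longrightarrow> cols n A ! x = (\<lambda>t. A (Suc t) (Suc x))"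
  by (simp add: cols_def del: upt_Suc)

lemma elim_det_cong: "mat_eq n A B \<Longrightarrow> elim_det n A = elim_det n B"
  unfolding elim_det_def by (rule col_det_cong) (auto simp: nth_cols mat_eq_def)

lemma elim_det_add_col:
  assumes "p \<in> {1..n}" "q \<in> {1..n}" "p \<noteq> q"
  shows "abel_eq (elim_det n (add_col A p q a)) (elim_det n A)"
proof -
  have "cols n (add_col A p q a) =
      (cols n A)[q - 1 := col_add (cols n A ! (q - 1)) (cols n A ! (p - 1)) a]"
    by (rule nth_equalityI) (use assms in \<open>auto simp: nth_cols nth_list_update add_col_def col_add_def fun_eq_iff\<close>)
  moreover have "abel_eq (col_det n ((cols n A)[q - 1 := col_add (cols n A ! (q - 1)) (cols n A ! (p - 1)) a]))
                         (col_det n (cols n A))"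
    by (rule col_det_col_add) (use assms in auto)
  ultimately show ?thesis by (simp add: elim_det_def)
qed

lemma elim_det_lower_triangular:
  assumes "lower_triangular n L" "\<And>i. i \<in> {1..n} \<Longrightarrow> L i i \<noteq> 0"
  shows "abel_eq (elim_det n L) (prod_list (map (\<lambda>i. L i i) [1..<Suc n]))"
proof -
  have "abel_eq (col_det n (cols n L)) (prod_list (map (\<lambda>x. (cols n L ! x) x) [0..<n]))"
    by (rule col_det_lower_triangular) (use assms in \<open>auto simp: nth_cols lower_triangular_def\<close>)
  moreover have "map (\<lambda>x. (cols n L ! x) x) [0..<n] = map (\<lambda>i. L i i) [1..<Suc n]"
    by (simp add: nth_cols map_Suc_upt[symmetric] del: upt_Suc)
  ultimately show ?thesis by (simp add: elim_det_def)
qed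

lemma mat_eq_refl [simp]: "mat_eq n A A"
  by (simp add: mat_eq_def)

lemma mat_eq_sym: "mat_eq n A B \<Longrightarrow> mat_eq n B A"
  by (simp add: mat_eq_def)

lemma mat_eq_trans [trans]: "mat_eq n A B \<Longrightarrow> mat_eq n B C \<Longrightarrow> mat_eq n A C"
  by (simp add: mat_eq_def)

lemma mat_mult_assoc:
  "mat_mult n (mat_mult n A B) C = mat_mult n A (mat_mult n (B::nat \<Rightarrow> nat \<Rightarrow> 'a::ring_1) C)"
proof (intro ext)
  fix i k
  have "mat_mult n (mat_mult n A B) C i k = (\<Sum>j\<in>{1..n}. \<Sum>l\<in>{1..n}. A i l * B l j * C j k)"
    by (simp add: mat_mult_def sum_distrib_right)
  also have "\<dots> = (\<Sum>l\<in>{1..n}. \<Sum>j\<in>{1..n}. A i l * B l j * C j k)"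
    by (rule sum.swap)
  also have "\<dots> = mat_mult n A (mat_mult n B C) i k"
    by (simp add: mat_mult_def sum_distrib_left mult.assoc)
  finally show "mat_mult n (mat_mult n A B) C i k = mat_mult n A (mat_mult n B C) i k" .
qed

lemma mat_eq_mult_left: "mat_eq n X Y \<Longrightarrow> mat_eq n (mat_mult n E X) (mat_mult n E (Y::nat \<Rightarrow> nat \<Rightarrow> 'a::ring_1))"
  by (simp add: mat_eq_def mat_mult_def)

lemma mat_eq_mult_right: "mat_eq n X Y \<Longrightarrow> mat_eq n (mat_mult n X E) (mat_mult n (Y::nat \<Rightarrow> nat \<Rightarrow> 'a::ring_1) E)"
  by (simp add: mat_eq_def mat_mult_def)

lemma mat_mult_id_right: "mat_eq n (mat_mult n A mat_id) (A::nat \<Rightarrow> nat \<Rightarrow> 'a::ring_1)"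
  by (simp add: mat_eq_def mat_mult_def mat_id_def if_distrib[of "\<lambda>x. _ * x"] cong: if_cong)

lemma mat_mult_id_left: "mat_eq n (mat_mult n mat_id A) (A::nat \<Rightarrow> nat \<Rightarrow> 'a::ring_1)"
  by (simp add: mat_eq_def mat_mult_def mat_id_def if_distrib[of "\<lambda>x. x * _"] cong: if_cong)

lemma mat_mult_cancel_inner:
  assumes "mat_eq n (mat_mult n X Y) mat_id"
  shows "mat_eq n (mat_mult n (mat_mult n A X) (mat_mult n Y B)) (mat_mult n A (B::nat \<Rightarrow> nat \<Rightarrow> 'a::ring_1))"
proof -
  have "mat_eq n (mat_mult n A (mat_mult n (mat_mult n X Y) B)) (mat_mult n A (mat_mult n mat_id B))"
    by (rule mat_eq_mult_left[OF mat_eq_mult_right[OF assms]])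
  also have "mat_eq n \<dots> (mat_mult n A B)"
    by (rule mat_eq_mult_left[OF mat_mult_id_left])
  finally show ?thesis by (simp add: mat_mult_assoc)
qed

lemma mat_mult_elem_mat:
  assumes "p \<in> {1..n}"
  shows "mat_eq n (mat_mult n A (elem_mat p q a)) (add_col (A::nat \<Rightarrow> nat \<Rightarrow> 'a::ring_1) p q a)"
  unfolding mat_eq_def
proof (intro ballI)
  fix i k assume "i \<in> {1..n}" "k \<in> {1..n}"
  have "mat_mult n A (elem_mat p q a) i k = (\<Sum>j\<in>{1..n}. (if j = k then A i j else 0)) +
      (\<Sum>j\<in>{1..n}. (if j = p then (if k = q then A i j * a else 0) else 0))"
    by (simp add: mat_mult_def elem_mat_def mat_id_def distrib_left sum.distrib
        if_distrib[of "\<lambda>x. _ * x"] cong: if_cong)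
  also have "\<dots> = add_col A p q a i k"
    using assms \<open>k \<in> {1..n}\<close> by (simp add: add_col_def)
  finally show "mat_mult n A (elem_mat p q a) i k = add_col A p q a i k" .
qed

definition diag_entry :: "nat \<Rightarrow> 'a::ring_1 \<Rightarrow> nat \<Rightarrow> 'a" where
  "diag_entry n x i = (if i = n then x else 1)"

lemma mat_mult_diag_last_right:
  "k \<in> {1..n} \<Longrightarrow> mat_mult n X (diag_last n x) i k = X i k * diag_entry n x k"
  by (simp add: mat_mult_def diag_last_def diag_entry_def if_distrib[of "\<lambda>y. _ * y"] cong: if_cong)

lemma mat_mult_diag_last_left:
  "i \<in> {1..n} \<Longrightarrow> mat_mult n (diag_last n x) X i k = diag_entry n x i * X i k"
  by (simp add: mat_mult_def diag_last_def diag_entry_def if_distrib[of "\<lambda>y. y * _"] cong: if_cong)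

lemma diag_entry_nonzero: "(x::'a::division_ring) \<noteq> 0 \<Longrightarrow> diag_entry n x i \<noteq> 0"
  by (simp add: diag_entry_def)

lemma elem_mat_diag_last_commute:
  assumes "p \<noteq> q" "(x::'a::division_ring) \<noteq> 0"
  shows "mat_eq n (mat_mult n (elem_mat p q a) (diag_last n x))
     (mat_mult n (diag_last n x) (elem_mat p q (inverse (diag_entry n x p) * a * diag_entry n x q)))"
  using assms diag_entry_nonzero[OF assms(2), of n]
  by (auto simp: mat_eq_def mat_mult_diag_last_right mat_mult_diag_last_left elem_mat_def mat_id_def mult.assoc)

lemma elem_prods_diag_last_commute:
  assumes "E \<in> elem_prods n" "(x::'a::division_ring) \<noteq> 0"
  shows "\<exists>E'\<in>elem_prods n. mat_eq n (mat_mult n E (diag_last n x)) (mat_mult n (diag_last n x) E')"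
  using assms(1)
proof (induction rule: elem_prods.induct)
  case id
  show ?case
    by (rule bexI[OF _ elem_prods.id]) (meson mat_eq_sym mat_eq_trans mat_mult_id_left mat_mult_id_right)
next
  case (step E p q a)
  then obtain E' where E': "E' \<in> elem_prods n"
    "mat_eq n (mat_mult n E (diag_last n x)) (mat_mult n (diag_last n x) E')" by blast
  define a' where "a' = inverse (diag_entry n x p) * a * diag_entry n x q"
  have "mat_eq n (mat_mult n (mat_mult n E (elem_mat p q a)) (diag_last n x))
                 (mat_mult n E (mat_mult n (diag_last n x) (elem_mat p q a')))"
    unfolding mat_mult_assoc a'_def
    by (rule mat_eq_mult_left[OF elem_mat_diag_last_commute]) (use step assms in auto)
  moreover have "mat_eq n (mat_mult n E (mat_mult n (diag_last n x) (elem_mat p q a')))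
                          (mat_mult n (diag_last n x) (mat_mult n E' (elem_mat p q a')))"
    using mat_eq_mult_right[OF E'(2)] by (simp only: mat_mult_assoc)
  ultimately show ?case using elem_prods.step[OF E'(1) step(2,3,4)] mat_eq_trans by blast
qed

lemma elim_det_mult_elem_prods:
  "E \<in> elem_prods n \<Longrightarrow> abel_eq (elim_det n (mat_mult n A E)) (elim_det n (A::nat \<Rightarrow> nat \<Rightarrow> 'a::division_ring))"
proof (induction rule: elem_prods.induct)
  case id
  then show ?case using elim_det_cong[OF mat_mult_id_right, of n A] by simp
next
  case (step E p q a)
  have "elim_det n (mat_mult n A (mat_mult n E (elem_mat p q a))) = elim_det n (add_col (mat_mult n A E) p q a)"
    unfolding mat_mult_assoc[symmetric] by (rule elim_det_cong[OF mat_mult_elem_mat]) (use step in simp)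
  also have "abel_eq \<dots> (elim_det n (mat_mult n A E))"
    by (rule elim_det_add_col) (use step in auto)
  finally show ?case using step.IH abel_eq_trans by blast
qed

lemma elim_det_diag_last:
  assumes "n \<ge> 1" "(x::'a::division_ring) \<noteq> 0"
  shows "abel_eq (elim_det n (diag_last n x)) x"
proof -
  have "map (\<lambda>i. diag_last n x i i) [1..<n] = map (\<lambda>_. 1) [1..<n]"
    by (simp add: diag_last_def)
  then have "map (\<lambda>i. diag_last n x i i) [1..<n] = replicate (n - 1) 1"
    by (simp add: map_replicate_const)
  then have "prod_list (map (\<lambda>i. diag_last n x i i) [1..<Suc n]) = x"
    using assms(1) by (simp add: diag_last_def)
  moreover have "abel_eq (elim_det n (diag_last n x)) (prod_list (map (\<lambda>i. diag_last n x i i) [1..<Suc n]))"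
    using assms(2) by (intro elim_det_lower_triangular) (auto simp: lower_triangular_def diag_last_def)
  ultimately show ?thesis by simp
qed

lemma elim_det_factor:
  assumes "n \<ge> 1" "E \<in> elem_prods n" "(x::'a::division_ring) \<noteq> 0"
    and "mat_eq n A (mat_mult n E (diag_last n x))"
  shows "abel_eq (elim_det n A) x"
proof -
  obtain E' where E': "E' \<in> elem_prods n"
    "mat_eq n (mat_mult n E (diag_last n x)) (mat_mult n (diag_last n x) E')"
    using elem_prods_diag_last_commute[OF assms(2,3)] by blast
  have "elim_det n A = elim_det n (mat_mult n (diag_last n x) E')"
    using elim_det_cong mat_eq_trans[OF assms(4) E'(2)] by blast
  then show ?thesis
    using elim_det_mult_elem_prods[OF E'(1)] elim_det_diag_last[OF assms(1,3)] abel_eq_trans by metis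
qed

definition elem_diag_factorable :: "nat \<Rightarrow> (nat \<Rightarrow> nat \<Rightarrow> 'a::division_ring) \<Rightarrow> bool" where
  "elem_diag_factorable n A \<longleftrightarrow>
     (\<exists>E\<in>elem_prods n. \<exists>x. x \<noteq> 0 \<and> mat_eq n A (mat_mult n E (diag_last n x)))"

lemma mat_invertible_cong: "mat_eq n A B \<Longrightarrow> mat_invertible n A \<Longrightarrow> mat_invertible n (B::nat \<Rightarrow> nat \<Rightarrow> 'a::ring_1)"
  unfolding mat_invertible_def
  by (meson mat_eq_mult_left mat_eq_mult_right mat_eq_sym mat_eq_trans)

lemma mat_invertible_mult:
  assumes "mat_invertible n A" "mat_invertible n (B::nat \<Rightarrow> nat \<Rightarrow> 'a::ring_1)"
  shows "mat_invertible n (mat_mult n A B)"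
proof -
  obtain A' B' where A': "mat_eq n (mat_mult n A A') mat_id" "mat_eq n (mat_mult n A' A) mat_id"
    and B': "mat_eq n (mat_mult n B B') mat_id" "mat_eq n (mat_mult n B' B) mat_id"
    using assms unfolding mat_invertible_def by blast
  have "mat_eq n (mat_mult n (mat_mult n A B) (mat_mult n B' A')) mat_id"
    using mat_eq_trans[OF mat_mult_cancel_inner[OF B'(1)] A'(1)] .
  moreover have "mat_eq n (mat_mult n (mat_mult n B' A') (mat_mult n A B)) mat_id"
    using mat_eq_trans[OF mat_mult_cancel_inner[OF A'(2)] B'(2)] .
  ultimately show ?thesis unfolding mat_invertible_def by blast
qed

lemma mat_invertible_elem_mat:
  assumes "p \<in> {1..n}" "p \<noteq> q"
  shows "mat_invertible n (elem_mat p q a :: nat \<Rightarrow> nat \<Rightarrow> 'a::ring_1)"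
proof -
  have "mat_eq n (mat_mult n (elem_mat p q b) (elem_mat p q (- b))) (mat_id :: nat \<Rightarrow> nat \<Rightarrow> 'a)" for b
    by (rule mat_eq_trans[OF mat_mult_elem_mat[OF assms(1)]])
      (use assms in \<open>auto simp: mat_eq_def add_col_def elem_mat_def mat_id_def\<close>)
  from this[of a] this[of "- a"] show ?thesis unfolding mat_invertible_def by auto
qed

lemma mat_invertible_diag_last:
  assumes "(x::'a::division_ring) \<noteq> 0"
  shows "mat_invertible n (diag_last n x)"
proof -
  have "mat_eq n (mat_mult n (diag_last n y) (diag_last n (inverse y))) mat_id" if "y \<noteq> 0" for y :: 'a
    using that by (auto simp: mat_eq_def mat_mult_diag_last_right diag_last_def diag_entry_def mat_id_def)
  from this[of x] this[of "inverse x"] assms show ?thesis unfolding mat_invertible_def by auto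
qed

lemma elem_prods_invertible: "E \<in> elem_prods n \<Longrightarrow> mat_invertible n (E :: nat \<Rightarrow> nat \<Rightarrow> 'a::ring_1)"
proof (induction rule: elem_prods.induct)
  case id
  then show ?case unfolding mat_invertible_def by (blast intro: mat_mult_id_left)
next
  case (step E p q a)
  then show ?case by (simp add: mat_invertible_mult mat_invertible_elem_mat)
qed

lemma elem_diag_factorable_invertible:
  "elem_diag_factorable n A \<Longrightarrow> mat_invertible n A"
  unfolding elem_diag_factorable_def
  by (metis mat_eq_sym mat_invertible_cong mat_invertible_mult elem_prods_invertible mat_invertible_diag_last)

text \<open>Here Dieudonne's theorem enters: the class of the last diagonal entry does not depend on
  the factorisation chosen by \<open>SOME\<close>, because \<open>elim_det\<close> recovers it.\<close>

lemma dieudonne_det_elem_diag_factorable: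
  assumes "n \<ge> 1" "elem_diag_factorable n A"
  shows "dieudonne_det n A = cls (elim_det n A)"
proof -
  let ?P = "\<lambda>x. x \<noteq> 0 \<and> (\<exists>E\<in>elem_prods n. mat_eq n A (mat_mult n E (diag_last n x)))"
  have "\<exists>x. ?P x" using assms(2) unfolding elem_diag_factorable_def by blast
  then have "?P (SOME x. ?P x)" by (rule someI_ex)
  then have "abel_eq (elim_det n A) (SOME x. ?P x)" using elim_det_factor[OF assms(1)] by blast
  then show ?thesis
    using elem_diag_factorable_invertible[OF assms(2)] by (simp add: dieudonne_det_def cls_eqI)
qed

inductive col_equiv :: "nat \<Rightarrow> (nat \<Rightarrow> nat \<Rightarrow> 'a::ring_1) \<Rightarrow> (nat \<Rightarrow> nat \<Rightarrow> 'a) \<Rightarrow> bool" for n where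
  mat_eq: "mat_eq n A B \<Longrightarrow> col_equiv n A B"
| add_col: "col_equiv n A B \<Longrightarrow> p \<in> {1..n} \<Longrightarrow> q \<in> {1..n} \<Longrightarrow> p \<noteq> q \<Longrightarrow> col_equiv n A (add_col B p q a)"

lemma add_col_cancel: "p \<noteq> q \<Longrightarrow> add_col (add_col A p q a) p q (- a) = A"
  by (auto simp: add_col_def fun_eq_iff algebra_simps)

lemma mat_eq_add_col: "p \<in> {1..n} \<Longrightarrow> mat_eq n A B \<Longrightarrow> mat_eq n (add_col A p q a) (add_col B p q a)"
  by (simp add: mat_eq_def add_col_def)

lemma col_equiv_mat_eq_right: "col_equiv n A B \<Longrightarrow> mat_eq n B C \<Longrightarrow> col_equiv n A C"
proof (induction arbitrary: C rule: col_equiv.induct)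
  case (mat_eq A B)
  then show ?case using mat_eq_trans col_equiv.mat_eq by blast
next
  case (add_col A B p q a)
  have "mat_eq n B (add_col C p q (- a))"
    using mat_eq_add_col[OF add_col.hyps(2) add_col.prems, where q = q and a = "- a"] add_col.hyps(4)
    by (simp add: add_col_cancel)
  then have "col_equiv n A (add_col (add_col C p q (- a)) p q a)"
    using add_col.IH add_col.hyps(2-4) by (blast intro: col_equiv.add_col)
  then show ?case using add_col_cancel[OF add_col.hyps(4), of C "- a"] by simp
qed

lemma col_equiv_trans [trans]:
  assumes "col_equiv n A B" "col_equiv n B C"
  shows "col_equiv n A C"
proof -
  have "col_equiv n B C \<Longrightarrow> col_equiv n A B \<Longrightarrow> col_equiv n A C"
    by (induction rule: col_equiv.induct) (auto intro: col_equiv_mat_eq_right col_equiv.add_col)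
  then show ?thesis using assms by blast
qed

lemma elim_det_col_equiv: "col_equiv n A B \<Longrightarrow> abel_eq (elim_det n B) (elim_det n A)"
proof (induction rule: col_equiv.induct)
  case (mat_eq A B)
  then show ?case by (simp add: elim_det_cong)
next
  case (add_col A B p q a)
  then show ?case using elim_det_add_col abel_eq_trans by blast
qed

lemma elem_diag_factorable_cong:
  "mat_eq n A B \<Longrightarrow> elem_diag_factorable n A \<Longrightarrow> elem_diag_factorable n B"
  unfolding elem_diag_factorable_def by (meson mat_eq_sym mat_eq_trans)

lemma diag_last_elem_mat_commute:
  assumes "p \<noteq> q" "(x::'a::division_ring) \<noteq> 0"
  shows "mat_eq n (mat_mult n (diag_last n x) (elem_mat p q b))
     (mat_mult n (elem_mat p q (diag_entry n x p * b * inverse (diag_entry n x q))) (diag_last n x))"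
  using mat_eq_sym[OF elem_mat_diag_last_commute[OF assms, of n "diag_entry n x p * b * inverse (diag_entry n x q)"]]
    diag_entry_nonzero[OF assms(2), of n]
  by (simp add: mult.assoc)

lemma elem_diag_factorable_add_col:
  assumes "elem_diag_factorable n A" "p \<in> {1..n}" "q \<in> {1..n}" "p \<noteq> q"
  shows "elem_diag_factorable n (add_col A p q a)"
proof -
  obtain E x where E: "E \<in> elem_prods n" "x \<noteq> 0" "mat_eq n A (mat_mult n E (diag_last n x))"
    using assms(1) elem_diag_factorable_def by blast
  define a' where "a' = diag_entry n x p * a * inverse (diag_entry n x q)"
  have "mat_eq n (add_col A p q a) (mat_mult n A (elem_mat p q a))"
    by (rule mat_eq_sym[OF mat_mult_elem_mat[OF assms(2)]])
  also have "mat_eq n \<dots> (mat_mult n E (mat_mult n (diag_last n x) (elem_mat p q a)))"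
    using mat_eq_mult_right[OF E(3)] by (simp only: mat_mult_assoc)
  also have "mat_eq n \<dots> (mat_mult n (mat_mult n E (elem_mat p q a')) (diag_last n x))"
    unfolding a'_def mat_mult_assoc by (rule mat_eq_mult_left[OF diag_last_elem_mat_commute[OF assms(4) E(2)]])
  finally show ?thesis
    using elem_prods.step[OF E(1) assms(2-4)] E(2) unfolding elem_diag_factorable_def by blast
qed

lemma elem_diag_factorable_col_equiv:
  "col_equiv n A B \<Longrightarrow> elem_diag_factorable n A \<longleftrightarrow> elem_diag_factorable n B"
proof (induction rule: col_equiv.induct)
  case (mat_eq A B)
  then show ?case using elem_diag_factorable_cong mat_eq_sym by blast
next
  case (add_col A B p q a)
  then show ?case
    using elem_diag_factorable_add_col[of n B p q a] elem_diag_factorable_add_col[of n "add_col B p q a" p q "- a"]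
    by (auto simp: add_col_cancel)
qed

definition scale_col_pair :: "(nat \<Rightarrow> nat \<Rightarrow> 'a::division_ring) \<Rightarrow> nat \<Rightarrow> nat \<Rightarrow> 'a \<Rightarrow> nat \<Rightarrow> nat \<Rightarrow> 'a" where
  "scale_col_pair A p q u =
     (\<lambda>i k. if k = p then A i k * u else if k = q then A i k * inverse u else A i k)"

text \<open>Whitehead's identity: \<open>diag(u, u\<^sup>-\<^sup>1)\<close> is a product of six transvections.\<close>

lemma col_equiv_scale_col_pair:
  assumes "p \<in> {1..n}" "q \<in> {1..n}" "p \<noteq> q" "u \<noteq> 0"
  shows "col_equiv n A (scale_col_pair A p q u)"
proof -
  let ?B = "add_col (add_col (add_col (add_col (add_col (add_col A
              p q u) q p (- inverse u)) p q u) p q (-1)) q p 1) p q (-1)"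
  have "col_equiv n A ?B"
    by (intro col_equiv.add_col col_equiv.mat_eq mat_eq_refl) (use assms in auto)
  moreover have "?B = scale_col_pair A p q u"
    using assms(3,4) by (auto simp: add_col_def scale_col_pair_def fun_eq_iff algebra_simps)
  ultimately show ?thesis by simp
qed

lemma elem_diag_factorable_diag_last: "(x::'a::division_ring) \<noteq> 0 \<Longrightarrow> elem_diag_factorable n (diag_last n x)"
  unfolding elem_diag_factorable_def using mat_eq_sym[OF mat_mult_id_left] elem_prods.id by blast

text \<open>The entries of a diagonal matrix are moved one by one into the last position, using
  \<open>diag(\<dots>, y, d, \<dots>) \<sim> diag(\<dots>, 1, d y, \<dots>)\<close>.\<close>

lemma elem_diag_factorable_diag:
  assumes "\<And>i. i \<in> {1..n} \<Longrightarrow> (d i::'a::division_ring) \<noteq> 0"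
  shows "elem_diag_factorable n (\<lambda>i k. if i = k then d i else 0)"
proof (cases "n = 0")
  case True
  then show ?thesis
    using elem_diag_factorable_diag_last[of "1::'a" n] by (simp add: elem_diag_factorable_def mat_eq_def)
next
  case False
  define \<Delta> where "\<Delta> j y = (\<lambda>i k. if i = k then (if i < j then 1 else if i = j then y else d i) else 0)"
    for j and y :: 'a
  have "\<forall>y. y \<noteq> 0 \<longrightarrow> elem_diag_factorable n (\<Delta> j y)" if "1 \<le> j" "j \<le> n" for j
    using that(2)
  proof (induction j rule: inc_induct)
    case base
    have "mat_eq n (diag_last n y) (\<Delta> n y)" for y by (auto simp: mat_eq_def diag_last_def \<Delta>_def)
    then show ?case using elem_diag_factorable_diag_last elem_diag_factorable_cong by blast
  next
    case (step m)
    show ?case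
    proof (intro allI impI)
      fix y :: 'a assume y: "y \<noteq> 0"
      have "scale_col_pair (\<Delta> m y) m (Suc m) (inverse y) = \<Delta> (Suc m) (d (Suc m) * y)"
        using y by (auto simp: scale_col_pair_def \<Delta>_def fun_eq_iff)
      moreover have "elem_diag_factorable n (\<Delta> (Suc m) (d (Suc m) * y))"
        using step.IH step.hyps assms y by simp
      moreover have "col_equiv n (\<Delta> m y) (scale_col_pair (\<Delta> m y) m (Suc m) (inverse y))"
        using step.hyps that y by (intro col_equiv_scale_col_pair) auto
      ultimately show "elem_diag_factorable n (\<Delta> m y)"
        using elem_diag_factorable_col_equiv by metis
    qed
  qed
  then have "elem_diag_factorable n (\<Delta> 1 (d 1))" using False assms by simp
  moreover have "mat_eq n (\<Delta> 1 (d 1)) (\<lambda>i k. if i = k then d i else 0)"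
    by (auto simp: mat_eq_def \<Delta>_def)
  ultimately show ?thesis using elem_diag_factorable_cong by blast
qed

lemma col_equiv_add_col_prefix:
  assumes "r \<in> {1..n}" "l < r"
  shows "col_equiv n A (\<lambda>i k. if 1 \<le> k \<and> k \<le> l then A i k + A i r * f k else A i k)"
  using assms(2)
proof (induction l)
  case 0
  then show ?case by (intro col_equiv.mat_eq) (simp add: mat_eq_def)
next
  case (Suc l)
  let ?X = "\<lambda>i k. if 1 \<le> k \<and> k \<le> l then A i k + A i r * f k else A i k"
  have "(\<lambda>i k. if 1 \<le> k \<and> k \<le> Suc l then A i k + A i r * f k else A i k) = add_col ?X r (Suc l) (f (Suc l))"
    using Suc.prems by (auto simp: add_col_def fun_eq_iff)
  moreover have "col_equiv n A (add_col ?X r (Suc l) (f (Suc l)))"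
    using Suc assms(1) by (intro col_equiv.add_col) auto
  ultimately show ?case by simp
qed

text \<open>Once the rows below \<open>r\<close> are diagonal, column \<open>r\<close> is a multiple of the \<open>r\<close>-th unit
  vector, so it clears row \<open>r\<close> without changing anything else.\<close>

lemma lower_triangular_clear_row:
  assumes "lower_triangular n L" "r \<in> {1..n}" "(L r r::'a::division_ring) \<noteq> 0"
    and "\<And>i. i \<in> {1..n} \<Longrightarrow> r < i \<Longrightarrow> L i r = 0"
  obtains L' where "col_equiv n L L'"
    "\<And>i k. i \<in> {1..n} \<Longrightarrow> k \<in> {1..n} \<Longrightarrow> L' i k = (if i = r \<and> k < r then 0 else L i k)"
proof -
  define L' where "L' = (\<lambda>i k. if 1 \<le> k \<and> k \<le> r - 1 then L i k + L i r * - (inverse (L r r) * L r k) else L i k)"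
  have "col_equiv n L L'"
    unfolding L'_def using assms(2) by (intro col_equiv_add_col_prefix) auto
  moreover have "L i r = 0" if "i \<in> {1..n}" "i \<noteq> r" for i
    using assms(1,2,4) that by (cases "i < r") (auto simp: lower_triangular_def)
  then have "L' i k = (if i = r \<and> k < r then 0 else L i k)" if "i \<in> {1..n}" "k \<in> {1..n}" for i k
    using that assms(3) by (auto simp: L'_def)
  ultimately show ?thesis using that by blast
qed

lemma col_equiv_lower_triangular_diag:
  assumes "lower_triangular n L" "\<And>i. i \<in> {1..n} \<Longrightarrow> (L i i::'a::division_ring) \<noteq> 0"
  shows "col_equiv n L (\<lambda>i k. if i = k then L i i else 0)"
proof -
  have "col_equiv n L (\<lambda>i k. if i = k then L i i else 0)"
    if "lower_triangular n L" "\<And>i. i \<in> {1..n} \<Longrightarrow> L i i \<noteq> 0"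
      and "\<And>i k. i \<in> {1..n} \<Longrightarrow> k \<in> {1..n} \<Longrightarrow> m < i \<Longrightarrow> k \<noteq> i \<Longrightarrow> L i k = 0"
    for m and L :: "nat \<Rightarrow> nat \<Rightarrow> 'a"
    using that
  proof (induction m arbitrary: L)
    case 0
    then show ?case by (intro col_equiv.mat_eq) (auto simp: mat_eq_def)
  next
    case (Suc m)
    show ?case
    proof (cases "Suc m \<le> n")
      case False
      then show ?thesis using Suc by auto
    next
      case True
      then obtain L' where L': "col_equiv n L L'"
        "\<And>i k. i \<in> {1..n} \<Longrightarrow> k \<in> {1..n} \<Longrightarrow> L' i k = (if i = Suc m \<and> k < Suc m then 0 else L i k)"
        using lower_triangular_clear_row[OF Suc.prems(1), of "Suc m"] Suc.prems(2,3) by auto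
      note \<open>col_equiv n L L'\<close>
      also have "col_equiv n L' (\<lambda>i k. if i = k then L' i i else 0)"
      proof (rule Suc.IH)
        show "lower_triangular n L'" using Suc.prems(1) L'(2) by (auto simp: lower_triangular_def)
        show "L' i i \<noteq> 0" if "i \<in> {1..n}" for i using Suc.prems(2) that L'(2) by auto
        show "L' i k = 0" if "i \<in> {1..n}" "k \<in> {1..n}" "m < i" "k \<noteq> i" for i k
          using Suc.prems(1,3) that L'(2) by (cases "i = Suc m") (auto simp: lower_triangular_def)
      qed
      also have "col_equiv n \<dots> (\<lambda>i k. if i = k then L i i else 0)"
        using L'(2) by (intro col_equiv.mat_eq) (auto simp: mat_eq_def)
      finally show ?thesis .
    qed
  qed
  from this[of L n] assms show ?thesis by auto
qed

lemma dieudonne_det_col_equiv_lower_triangular: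
  assumes "n \<ge> 1" "col_equiv n A L" "lower_triangular n L" "\<And>i. i \<in> {1..n} \<Longrightarrow> L i i \<noteq> 0"
  shows "dieudonne_det n A = cls (prod_list (map (\<lambda>i. L i i) [1..<Suc n]))"
proof -
  have "elem_diag_factorable n L"
    using col_equiv_lower_triangular_diag[OF assms(3,4)] elem_diag_factorable_diag[of n "\<lambda>i. L i i"]
      assms(4) elem_diag_factorable_col_equiv by blast
  then have "dieudonne_det n A = cls (elim_det n A)"
    using elem_diag_factorable_col_equiv[OF assms(2)] dieudonne_det_elem_diag_factorable[OF assms(1)] by blast
  also have "\<dots> = cls (prod_list (map (\<lambda>i. L i i) [1..<Suc n]))"
    using elim_det_col_equiv[OF assms(2)] elim_det_lower_triangular[OF assms(3,4)]
    by (intro cls_eqI) (meson abel_eq_sym abel_eq_trans)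
  finally show ?thesis .
qed

lemma not_invertible_row_comb:
  assumes "r \<in> {1..n}" "p \<in> {1..n}" "q \<in> {1..n}" "r \<noteq> p" "r \<noteq> q"
    and "\<And>j. j \<in> {1..n} \<Longrightarrow> A r j = a * A p j + b * A q j"
  shows "\<not> mat_invertible n (A::nat \<Rightarrow> nat \<Rightarrow> 'a::ring_1)"
proof
  assume "mat_invertible n A"
  then obtain B where B: "mat_eq n (mat_mult n A B) mat_id" unfolding mat_invertible_def by blast
  have "mat_mult n A B r r = (\<Sum>j\<in>{1..n}. (a * A p j + b * A q j) * B j r)"
    unfolding mat_mult_def using assms(6) by (intro sum.cong) auto
  also have "\<dots> = a * mat_mult n A B p r + b * mat_mult n A B q r"
    by (simp add: mat_mult_def distrib_right sum.distrib sum_distrib_left mult.assoc)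
  finally show False using B assms(1-5) by (simp add: mat_eq_def mat_id_def)
qed

section \<open>The frieze matrix\<close>

lemma crosses_col:
  assumes "2 \<le> i" "i + 2 \<le> k"
  shows "crosses reversed i k (k - 1) 1"
  using assms by (cases reversed) (auto simp: crosses_def cyc4_def vord_def)

lemma crosses_row:
  assumes "2 \<le> j" "j + 2 \<le> n"
  shows "crosses reversed n j 1 (n - 1)"
  using assms by (cases reversed) (auto simp: crosses_def cyc4_def vord_def)

definition cycle_prod :: "(nat \<Rightarrow> nat \<Rightarrow> 'a::monoid_mult) \<Rightarrow> nat \<Rightarrow> 'a" where
  "cycle_prod c N = prod_list (map (\<lambda>i. c i (i + 1)) [1..<N]) * c N 1"

text \<open>For \<open>t \<le> k\<close>, column \<open>k \<ge> 3\<close> is reduced by the columns \<open>k - 1\<close> and \<open>1\<close> with the coefficients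
  of the exchange relation for the crossing diagonals \<open>(i, k)\<close> and \<open>(k - 1, 1)\<close>; this clears
  the column above the diagonal.\<close>

definition frieze_reduce :: "nat \<Rightarrow> (nat \<Rightarrow> nat \<Rightarrow> 'a::division_ring) \<Rightarrow> nat \<Rightarrow> nat \<Rightarrow> nat \<Rightarrow> 'a" where
  "frieze_reduce n c t = (\<lambda>i k. if t \<le> k \<and> 3 \<le> k \<and> k \<le> n
     then frieze_mat c i k + frieze_mat c i (k - 1) * - (inverse (c 1 (k - 1)) * c 1 k)
            + frieze_mat c i 1 * - (inverse (c (k - 1) 1) * c (k - 1) k)
     else frieze_mat c i k)"

definition frieze_lower :: "nat \<Rightarrow> (nat \<Rightarrow> nat \<Rightarrow> 'a::division_ring) \<Rightarrow> nat \<Rightarrow> nat \<Rightarrow> 'a" where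
  "frieze_lower n c = add_col (add_col (frieze_reduce n c 3) 2 1 1) 1 2 (- 1)"

lemma frieze_reduce_step:
  "3 \<le> t \<Longrightarrow> t \<le> n \<Longrightarrow> frieze_reduce n c t =
     add_col (add_col (frieze_reduce n c (Suc t)) (t - 1) t (- (inverse (c 1 (t - 1)) * c 1 t)))
       1 t (- (inverse (c (t - 1) 1) * c (t - 1) t))"
  by (auto simp: frieze_reduce_def add_col_def fun_eq_iff)

lemma col_equiv_frieze_lower:
  assumes "n \<ge> 3"
  shows "col_equiv n (frieze_mat c) (frieze_lower n c)"
proof -
  have "col_equiv n (frieze_mat c) (frieze_reduce n c t)" if "3 \<le> t" "t \<le> Suc n" for t
    using that(2)
  proof (induction t rule: inc_induct)
    case base
    then show ?case by (intro col_equiv.mat_eq) (simp add: frieze_reduce_def mat_eq_def)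
  next
    case (step t)
    then have "3 \<le> t" "t \<le> n" using that(1) by auto
    then show ?case
      using step.IH by (simp add: frieze_reduce_step) (intro col_equiv.add_col; auto)
  qed
  from this[of 3] show ?thesis
    using assms unfolding frieze_lower_def by (intro col_equiv.add_col) auto
qed

lemma frieze_lower_eq:
  "frieze_lower n c i k =
     (if k = 1 then frieze_mat c i 1 + frieze_mat c i 2 else if k = 2 then - frieze_mat c i 1
      else frieze_reduce n c 3 i k)"
  by (auto simp: frieze_lower_def add_col_def frieze_reduce_def algebra_simps)

context
  fixes c :: "nat \<Rightarrow> nat \<Rightarrow> 'a::division_ring" and n :: nat and reversed :: bool
  assumes n: "n \<ge> 3" and frieze: "is_frieze n reversed c"
begin

lemma frieze_nonzero: "i \<in> {1..n} \<Longrightarrow> k \<in> {1..n} \<Longrightarrow> i \<noteq> k \<Longrightarrow> c i k \<noteq> 0"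
  using frieze by (simp add: is_frieze_def)

lemma frieze_triangle: "i \<in> {1..n} \<Longrightarrow> j \<in> {1..n} \<Longrightarrow> k \<in> {1..n} \<Longrightarrow> distinct [i, j, k] \<Longrightarrow>
    c i j * inverse (c k j) * c k i = c i k * inverse (c j k) * c j i"
  using frieze unfolding is_frieze_def by blast

lemma frieze_exchange: "i \<in> {1..n} \<Longrightarrow> j \<in> {1..n} \<Longrightarrow> k \<in> {1..n} \<Longrightarrow> l \<in> {1..n} \<Longrightarrow>
    crosses reversed i k j l \<Longrightarrow> c i k = c i j * inverse (c l j) * c l k + c i l * inverse (c j l) * c j k"
  using frieze unfolding is_frieze_def by blast

lemma frieze_reduce_above_diag:
  assumes "3 \<le> k" "k \<le> n" "1 \<le> i" "i < k"
  shows "frieze_reduce n c 3 i k = 0"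
proof -
  have nz: "c 1 (k - 1) \<noteq> 0" "c (k - 1) 1 \<noteq> 0"
    by (rule frieze_nonzero; use assms in auto)+
  consider "i = 1" | "i = k - 1" | "2 \<le> i" "i + 2 \<le> k" using assms by linarith
  then show ?thesis
  proof cases
    case 3
    have "c i k = c i (k - 1) * inverse (c 1 (k - 1)) * c 1 k + c i 1 * inverse (c (k - 1) 1) * c (k - 1) k"
      using assms 3 crosses_col by (intro frieze_exchange) auto
    moreover have "i \<noteq> k - 1" "i \<noteq> 1" "i \<noteq> k" using 3 by auto
    ultimately show ?thesis using assms by (simp add: frieze_reduce_def frieze_mat_def mult.assoc)
  qed (use assms nz in \<open>auto simp: frieze_reduce_def frieze_mat_def mult.assoc[symmetric]\<close>)
qed

lemma frieze_reduce_diag: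
  assumes "3 \<le> k" "k \<le> n"
  shows "frieze_reduce n c 3 k k = - (2 * (c k (k - 1) * inverse (c 1 (k - 1)) * c 1 k))"
proof -
  have "c k (k - 1) * inverse (c 1 (k - 1)) * c 1 k = c k 1 * inverse (c (k - 1) 1) * c (k - 1) k"
    using assms by (intro frieze_triangle) auto
  moreover have "k \<noteq> k - 1" "k \<noteq> 1" "k - 1 \<noteq> 1" using assms by auto
  ultimately show ?thesis using assms by (simp add: frieze_reduce_def frieze_mat_def mult.assoc mult_2 algebra_simps)
qed

lemma lower_triangular_frieze_lower: "lower_triangular n (frieze_lower n c)"
  using frieze_reduce_above_diag by (auto simp: lower_triangular_def frieze_lower_eq frieze_mat_def)

lemma frieze_lower_diag:
  "k \<in> {1..n} \<Longrightarrow> frieze_lower n c k k = (if k = 1 then c 1 2 else if k = 2 then - c 2 1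
     else - (2 * (c k (k - 1) * inverse (c 1 (k - 1)) * c 1 k)))"
  using frieze_reduce_diag[of k] by (auto simp: frieze_lower_eq frieze_mat_def)

lemma frieze_lower_diag_nonzero:
  assumes "(2::'a) \<noteq> 0" "k \<in> {1..n}"
  shows "frieze_lower n c k k \<noteq> 0"
proof -
  consider "k = 1" | "k = 2" | "3 \<le> k" using assms(2) by force
  then show ?thesis
  proof cases
    case 3
    have "c k (k - 1) \<noteq> 0" "c 1 (k - 1) \<noteq> 0" "c 1 k \<noteq> 0"
      by (rule frieze_nonzero; use 3 assms(2) in auto)+
    then show ?thesis using 3 assms by (simp add: frieze_lower_diag)
  qed (use n in \<open>simp_all add: frieze_lower_diag frieze_nonzero\<close>)
qed

lemma cycle_prod_Suc:
  assumes "2 \<le> N" "Suc N \<le> n"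
  shows "abel_eq (cycle_prod c N * (c (Suc N) N * inverse (c 1 N) * c 1 (Suc N))) (cycle_prod c (Suc N))"
proof -
  define P where "P = prod_list (map (\<lambda>i. c i (i + 1)) [1..<N])"
  have a: "c 1 N \<noteq> 0" and b: "c (Suc N) N \<noteq> 0" and e: "c N (Suc N) \<noteq> 0"
    by (rule frieze_nonzero; use assms in auto)+
  have "c 1 N * inverse (c (Suc N) N) * c (Suc N) 1 = c 1 (Suc N) * inverse (c N (Suc N)) * c N 1"
    using assms by (intro frieze_triangle) auto
  then have "c (Suc N) 1 = c (Suc N) N * inverse (c 1 N) * (c 1 (Suc N) * inverse (c N (Suc N)) * c N 1)"
    using a b by (metis mult.assoc nonzero_inverse_mult_cancel_left nonzero_mult_inverse_cancel_left)
  then have "cycle_prod c (Suc N) =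
      prod_list [P, c N (Suc N), c (Suc N) N, inverse (c 1 N), c 1 (Suc N), inverse (c N (Suc N)), c N 1]"
    using assms by (simp add: cycle_prod_def P_def mult.assoc)
  moreover have "cycle_prod c N * (c (Suc N) N * inverse (c 1 N) * c 1 (Suc N)) =
      prod_list [P, c N 1, c (Suc N) N, inverse (c 1 N), c 1 (Suc N), c N (Suc N), inverse (c N (Suc N))]"
    using e by (simp add: cycle_prod_def P_def mult.assoc)
  moreover have "abel_eq
      (prod_list [P, c N 1, c (Suc N) N, inverse (c 1 N), c 1 (Suc N), c N (Suc N), inverse (c N (Suc N))])
      (prod_list [P, c N (Suc N), c (Suc N) N, inverse (c 1 N), c 1 (Suc N), inverse (c N (Suc N)), c N 1])"
    by (rule abel_eq_prod_list_perm) (simp add: add_mset_commute)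
  ultimately show ?thesis by simp
qed

lemma frieze_lower_diag_prod:
  assumes "2 \<le> N"
  shows "N \<le> n \<Longrightarrow> abel_eq (prod_list (map (\<lambda>i. frieze_lower n c i i) [1..<Suc N]))
                              (- ((- 2) ^ (N - 2)) * cycle_prod c N)"
  using assms
proof (induction N rule: nat_induct_at_least)
  case base
  then show ?case by (simp add: frieze_lower_diag numeral_2_eq_2 cycle_prod_def)
next
  case (Suc N)
  define s :: 'a where "s = (- 2) ^ (N - 2)"
  define g where "g = c (Suc N) N * inverse (c 1 N) * c 1 (Suc N)"
  have "Suc N - 2 = Suc (N - 2)"
    using Suc.hyps by simp
  then have pow: "(- 2) ^ (Suc N - 2) = s * - 2"
    by (simp only: s_def power_Suc2)
  have "frieze_lower n c (Suc N) (Suc N) = - (2 * g)"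
    using Suc by (simp add: frieze_lower_diag g_def)
  then have "prod_list (map (\<lambda>i. frieze_lower n c i i) [1..<Suc (Suc N)]) =
      prod_list (map (\<lambda>i. frieze_lower n c i i) [1..<Suc N]) * - (2 * g)"
    by simp
  also have "abel_eq \<dots> ((- s * cycle_prod c N) * - (2 * g))"
    using Suc by (intro abel_eq_mult_right) (simp add: s_def)
  also have "(- s * cycle_prod c N) * - (2 * g) = - (s * - 2) * (cycle_prod c N * g)"
    by (simp add: algebra_simps mult_2 mult_2_right)
  also have "abel_eq \<dots> (- (s * - 2) * cycle_prod c (Suc N))"
    unfolding g_def by (intro abel_eq_mult_left cycle_prod_Suc) (use Suc in auto)
  finally show ?case unfolding pow .
qed

lemma frieze_mat_last_row:
  assumes "(2::'a) = 0" "j \<in> {1..n}"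
  shows "frieze_mat c n j = (c n 1 * inverse (c (n - 1) 1)) * frieze_mat c (n - 1) j
                          + (c n (n - 1) * inverse (c 1 (n - 1))) * frieze_mat c 1 j"
proof -
  have z: "c (n - 1) 1 \<noteq> 0" "c 1 (n - 1) \<noteq> 0"
    by (rule frieze_nonzero; use n in auto)+
  consider "j = 1" | "j = n - 1" | "j = n" | "2 \<le> j" "j + 2 \<le> n" using assms(2) n by force
  then show ?thesis
  proof cases
    case 3
    have "c n 1 * inverse (c (n - 1) 1) * c (n - 1) n = c n (n - 1) * inverse (c 1 (n - 1)) * c 1 n"
      using n by (intro frieze_triangle) auto
    moreover have "x + x = 0" for x :: 'a using assms(1) by (metis mult_2 mult_zero_left)
    moreover have "n \<noteq> n - 1" "n \<noteq> 1" "n - 1 \<noteq> 1" using n by auto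
    ultimately show ?thesis using 3 by (simp add: frieze_mat_def)
  next
    case 4
    have "c n j = c n 1 * inverse (c (n - 1) 1) * c (n - 1) j + c n (n - 1) * inverse (c 1 (n - 1)) * c 1 j"
      using 4 crosses_row by (intro frieze_exchange) auto
    moreover have "j \<noteq> n" "j \<noteq> n - 1" "j \<noteq> 1" using 4 by auto
    ultimately show ?thesis by (simp add: frieze_mat_def mult.assoc)
  qed (use n z in \<open>auto simp: frieze_mat_def mult.assoc\<close>)
qed

lemma frieze_mat_not_invertible: "(2::'a) = 0 \<Longrightarrow> \<not> mat_invertible n (frieze_mat c)"
  using n frieze_mat_last_row by (intro not_invertible_row_comb[of n n "n - 1" 1]) auto

end

theorem theoremA:
  fixes c :: "nat \<Rightarrow> nat \<Rightarrow> 'a::division_ring" and n :: nat and reversed :: bool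
  assumes "n \<ge> 3"
    and "is_frieze n reversed c"
  shows "dieudonne_det n (frieze_mat c) =
           cls_mult (cls (- ((- 2) ^ (n - 2))))
                    (cls (prod_list (map (\<lambda>i. c i (i + 1)) [1..<n]) * c n 1))"
proof (cases "(2::'a) = 0")
  case True
  then have "(- 2 :: 'a) ^ (n - 2) = 0" using assms(1) by simp
  then show ?thesis
    using frieze_mat_not_invertible[OF assms True]
    by (simp add: dieudonne_det_def cls_mult_cls) (simp add: cls_def)
next
  case False
  have "dieudonne_det n (frieze_mat c) = cls (prod_list (map (\<lambda>i. frieze_lower n c i i) [1..<Suc n]))"
    using assms False
    by (intro dieudonne_det_col_equiv_lower_triangular col_equiv_frieze_lower
        lower_triangular_frieze_lower frieze_lower_diag_nonzero) auto
  also have "\<dots> = cls (- ((- 2) ^ (n - 2)) * cycle_prod c n)"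
    using assms by (intro cls_eqI frieze_lower_diag_prod) auto
  finally show ?thesis by (simp add: cls_mult_cls cycle_prod_def)
qed

end
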